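(* Every SSSCG with weakly monotonic cost functions admits an OSE $(\sigma_\ell,\nu)$ in which $\sigma_\ell$ is pure.
   Context: A symmetric Stackelberg singleton congestion game (SSSCG) consists of a leader $\ell$, a finite set $F$ of followers, a finite set $R$ of resources which every player may select (each player selects exactly one), and cost functions $c_{i,\ell},c_{i,f}:\mathbb N\to\mathbb Q$ ($i\in R$) for the leader and the followers with $c_{i,\ell}(0)=c_{i,f}(0)=0$. The leader commits to a probability distribution $\sigma_\ell$ on $R$ (pure if it puts probability $1$ on one resource). A followers' configuration is $\nu\in\mathbb N^R$ with $\sum_i\nu_i=|F|$. The followers' expected cost of resource $i$ with $x$ followers is $c^{\sigma_\ell}_{i,f}(x)=\sigma_\ell(i)c_{i,f}(x+1)+(1-\sigma_\ell(i))c_{i,f}(x)$; the leader's cost is $c_\ell^{(\sigma_\ell,\nu)}=\sum_{i\in R}\sigma_\ell(i)c_{i,\ell}(\nu_i+1)$. $\nu$ is a Nash equilibrium for $\sigma_\ell$ ($\nu\in E^{\sigma_\ell}$) if for all $i$ with $\nu_i>0$ and all $j\ne i$, $c^{\sigma_\ell}_{i,f}(\nu_i)\le c^{\sigma_\ell}_{j,f}(\nu_j+1)$. An optimistic Stackelberg equilibrium (OSE) is a pair $(\sigma_\ell,\nu)$ with $\nu\in E^{\sigma_\ell}$ minimizing $c_\ell^{(\sigma_\ell,\nu)}$ over all such pairs. Weakly monotonic: $c_{i,\ell}(x)\le c_{i,\ell}(x+1)$, $c_{i,f}(x)\le c_{i,f}(x+1)$ for all $i,x$. *)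

theory Defs
  imports Complex_Main
begin

text \<open>R : finite set of resources; F : finite set of followers (only its cardinality matters);
  cl i x : leader's cost of resource i with x users; cf i x : followers' cost.\<close>

definition ssscg :: "'r set \<Rightarrow> 'f set \<Rightarrow> ('r \<Rightarrow> nat \<Rightarrow> rat) \<Rightarrow> ('r \<Rightarrow> nat \<Rightarrow> rat) \<Rightarrow> bool" where
  "ssscg R F cl cf \<longleftrightarrow> finite R \<and> R \<noteq> {} \<and> finite F \<and>
     (\<forall>i\<in>R. cl i 0 = 0 \<and> cf i 0 = 0)"

definition weakly_monotonic :: "'r set \<Rightarrow> ('r \<Rightarrow> nat \<Rightarrow> rat) \<Rightarrow> ('r \<Rightarrow> nat \<Rightarrow> rat) \<Rightarrow> bool" where
  "weakly_monotonic R cl cf \<longleftrightarrow> (\<forall>i\<in>R. \<forall>x. cl i x \<le> cl i (Suc x) \<and> cf i x \<le> cf i (Suc x))"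

definition leader_strategy :: "'r set \<Rightarrow> ('r \<Rightarrow> real) \<Rightarrow> bool" where
  "leader_strategy R \<sigma> \<longleftrightarrow> (\<forall>i. \<sigma> i \<ge> 0) \<and> (\<forall>i. i \<notin> R \<longrightarrow> \<sigma> i = 0) \<and> (\<Sum>i\<in>R. \<sigma> i) = 1"

definition pure_strategy :: "'r set \<Rightarrow> ('r \<Rightarrow> real) \<Rightarrow> bool" where
  "pure_strategy R \<sigma> \<longleftrightarrow> leader_strategy R \<sigma> \<and> (\<exists>i\<in>R. \<sigma> i = 1)"

definition configuration :: "'r set \<Rightarrow> 'f set \<Rightarrow> ('r \<Rightarrow> nat) \<Rightarrow> bool" where
  "configuration R F \<nu> \<longleftrightarrow> (\<forall>i. i \<notin> R \<longrightarrow> \<nu> i = 0) \<and> (\<Sum>i\<in>R. \<nu> i) = card F"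

definition follower_cost :: "('r \<Rightarrow> nat \<Rightarrow> rat) \<Rightarrow> ('r \<Rightarrow> real) \<Rightarrow> 'r \<Rightarrow> nat \<Rightarrow> real" where
  "follower_cost cf \<sigma> i x = \<sigma> i * of_rat (cf i (Suc x)) + (1 - \<sigma> i) * of_rat (cf i x)"

definition leader_cost :: "'r set \<Rightarrow> ('r \<Rightarrow> nat \<Rightarrow> rat) \<Rightarrow> ('r \<Rightarrow> real) \<Rightarrow> ('r \<Rightarrow> nat) \<Rightarrow> real" where
  "leader_cost R cl \<sigma> \<nu> = (\<Sum>i\<in>R. \<sigma> i * of_rat (cl i (Suc (\<nu> i))))"

definition is_NE :: "'r set \<Rightarrow> 'f set \<Rightarrow> ('r \<Rightarrow> nat \<Rightarrow> rat) \<Rightarrow> ('r \<Rightarrow> real) \<Rightarrow> ('r \<Rightarrow> nat) \<Rightarrow> bool" where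
  "is_NE R F cf \<sigma> \<nu> \<longleftrightarrow> configuration R F \<nu> \<and>
     (\<forall>i\<in>R. \<forall>j\<in>R. \<nu> i > 0 \<and> j \<noteq> i \<longrightarrow>
        follower_cost cf \<sigma> i (\<nu> i) \<le> follower_cost cf \<sigma> j (Suc (\<nu> j)))"

definition is_OSE :: "'r set \<Rightarrow> 'f set \<Rightarrow> ('r \<Rightarrow> nat \<Rightarrow> rat) \<Rightarrow> ('r \<Rightarrow> nat \<Rightarrow> rat)
    \<Rightarrow> ('r \<Rightarrow> real) \<Rightarrow> ('r \<Rightarrow> nat) \<Rightarrow> bool" where
  "is_OSE R F cl cf \<sigma> \<nu> \<longleftrightarrow> leader_strategy R \<sigma> \<and> is_NE R F cf \<sigma> \<nu> \<and>
     (\<forall>\<sigma>' \<nu>'. leader_strategy R \<sigma>' \<and> is_NE R F cf \<sigma>' \<nu>' \<longrightarrow>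
        leader_cost R cl \<sigma> \<nu> \<le> leader_cost R cl \<sigma>' \<nu>')"

end

theory Submission
  imports Defs
begin

text \<open>Let \<open>(\<sigma>, \<nu>)\<close> be any leader strategy with a follower equilibrium. The leader's cost is a
  convex combination of the values \<open>cl i (\<nu> i + 1)\<close> over the support of \<open>\<sigma>\<close>, so it is at least
  such a value for some \<open>i\<close>. Commit purely to \<open>i\<close> and minimise Rosenthal's potential over the
  configurations with at most \<open>\<nu> i\<close> followers on \<open>i\<close>. The minimiser admits no improving move
  except possibly onto \<open>i\<close> when \<open>i\<close> carries exactly \<open>\<nu> i\<close> followers; such a move is not
  improving either, because \<open>\<nu>\<close> is an equilibrium and costs are monotone. This gives an
  equilibrium \<open>\<mu>\<close> for the pure strategy with \<open>\<mu> i \<le> \<nu> i\<close>, hence leader cost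
  \<open>cl i (\<mu> i + 1) \<le> cl i (\<nu> i + 1)\<close>. A cheapest one among the finitely many pure pairs is an OSE.\<close>

definition pure_at :: "'r \<Rightarrow> 'r \<Rightarrow> real" where
  "pure_at i = (\<lambda>j. if j = i then 1 else 0)"

definition move_follower :: "('r \<Rightarrow> nat) \<Rightarrow> 'r \<Rightarrow> 'r \<Rightarrow> 'r \<Rightarrow> nat" where
  "move_follower \<mu> j k = \<mu>(j := \<mu> j - 1, k := \<mu> k + 1)"

definition rosenthal_potential :: "'r set \<Rightarrow> ('r \<Rightarrow> nat \<Rightarrow> real) \<Rightarrow> ('r \<Rightarrow> nat) \<Rightarrow> real" where
  "rosenthal_potential R D \<mu> = (\<Sum>l\<in>R. \<Sum>x<\<mu> l. D l (Suc x))"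

lemma sum_move_follower:
  fixes g :: "'r \<Rightarrow> nat \<Rightarrow> real"
  assumes "finite R" "j \<in> R" "k \<in> R" "j \<noteq> k"
  shows "(\<Sum>l\<in>R. g l (move_follower \<mu> j k l)) = (\<Sum>l\<in>R. g l (\<mu> l))
      + (g j (\<mu> j - 1) - g j (\<mu> j)) + (g k (\<mu> k + 1) - g k (\<mu> k))"
proof -
  have "(\<Sum>l\<in>R. g l (move_follower \<mu> j k l) - g l (\<mu> l))
      = (\<Sum>l\<in>{j,k}. g l (move_follower \<mu> j k l) - g l (\<mu> l))"
    by (rule sum.mono_neutral_right) (use assms in \<open>auto simp: move_follower_def\<close>)
  also have "\<dots> = (g j (\<mu> j - 1) - g j (\<mu> j)) + (g k (\<mu> k + 1) - g k (\<mu> k))"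
    using assms by (simp add: move_follower_def)
  finally show ?thesis by (simp add: sum_subtractf)
qed

lemma configuration_move_follower:
  assumes "finite R" "j \<in> R" "k \<in> R" "j \<noteq> k" "\<mu> j > 0" "configuration R F \<mu>"
  shows "configuration R F (move_follower \<mu> j k)"
proof -
  have "real (\<Sum>l\<in>R. move_follower \<mu> j k l) = (\<Sum>l\<in>R. real (move_follower \<mu> j k l))" by simp
  also have "\<dots> = (\<Sum>l\<in>R. real (\<mu> l))"
    using sum_move_follower[OF assms(1-4), of "\<lambda>l n. real n" \<mu>] assms(5) by (simp add: of_nat_diff)
  also have "\<dots> = real (\<Sum>l\<in>R. \<mu> l)" by simp
  finally have "(\<Sum>l\<in>R. move_follower \<mu> j k l) = (\<Sum>l\<in>R. \<mu> l)" by linarith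
  then show ?thesis using assms by (auto simp: configuration_def move_follower_def)
qed

lemma finite_configurations:
  assumes "finite R"
  shows "finite {\<mu>. configuration R F \<mu>}"
proof (rule finite_subset)
  show "{\<mu>. configuration R F \<mu>}
      \<subseteq> {f. \<forall>x. (x \<in> R \<longrightarrow> f x \<in> {0..card F}) \<and> (x \<notin> R \<longrightarrow> f x = 0)}"
  proof safe
    fix \<mu> x assume c: "configuration R F \<mu>" and x: "x \<in> R"
    have "\<mu> x \<le> (\<Sum>l\<in>R. \<mu> l)" by (rule member_le_sum) (use x assms in auto)
    then show "\<mu> x \<in> {0..card F}" using c by (auto simp: configuration_def)
  qed (auto simp: configuration_def)
  show "finite {f. \<forall>x. (x \<in> R \<longrightarrow> f x \<in> {0..card F}) \<and> (x \<notin> R \<longrightarrow> f x = (0::nat))}"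
    by (rule finite_set_of_finite_funs) (use assms in auto)
qed

lemma configuration_exists_less:
  assumes "finite R" "configuration R F \<mu>" "configuration R F \<nu>" "j \<in> R" "\<nu> j < \<mu> j"
  shows "\<exists>k\<in>R. \<mu> k < \<nu> k"
proof (rule ccontr)
  assume "\<not> ?thesis"
  then have "\<forall>l\<in>R. \<nu> l \<le> \<mu> l" by (simp add: not_less)
  then have "(\<Sum>l\<in>R. \<nu> l) < (\<Sum>l\<in>R. \<mu> l)"
    using sum_strict_mono_ex1[OF assms(1)] assms(4,5) by blast
  then show False using assms(2,3) by (simp add: configuration_def)
qed

lemma rosenthal_potential_move_follower:
  assumes "finite R" "j \<in> R" "k \<in> R" "j \<noteq> k" "\<mu> j > 0"
  shows "rosenthal_potential R D (move_follower \<mu> j k)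
      = rosenthal_potential R D \<mu> - D j (\<mu> j) + D k (\<mu> k + 1)"
proof -
  obtain n where n: "\<mu> j = Suc n" using assms(5) gr0_implies_Suc by blast
  show ?thesis
    unfolding rosenthal_potential_def
    using sum_move_follower[OF assms(1-4), of "\<lambda>l n. \<Sum>x<n. D l (Suc x)"] n by simp
qed

text \<open>Rosenthal's argument: a move changes the potential by exactly the moving follower's cost
  difference, so a minimiser over a set closed under the admissible moves \<open>A\<close> is stable.\<close>

lemma exists_stable_configuration:
  fixes D :: "'r \<Rightarrow> nat \<Rightarrow> real"
  assumes "finite R" and "finite S" and "S \<noteq> {}"
    and A: "\<And>\<mu> j k. A \<mu> j k \<Longrightarrow> j \<in> R \<and> k \<in> R \<and> j \<noteq> k \<and> \<mu> j > 0"
    and closed: "\<And>\<mu> j k. \<mu> \<in> S \<Longrightarrow> A \<mu> j k \<Longrightarrow> move_follower \<mu> j k \<in> S"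
  shows "\<exists>\<mu>\<in>S. \<forall>j k. A \<mu> j k \<longrightarrow> D j (\<mu> j) \<le> D k (\<mu> k + 1)"
proof -
  obtain \<mu> where \<mu>: "\<mu> \<in> S"
    and min: "\<And>\<mu>'. \<mu>' \<in> S \<Longrightarrow> rosenthal_potential R D \<mu> \<le> rosenthal_potential R D \<mu>'"
    using arg_min_if_finite(1)[OF assms(2,3)] arg_min_least[OF assms(2,3)] by blast
  show ?thesis
  proof (intro bexI[OF _ \<mu>] allI impI)
    fix j k assume "A \<mu> j k"
    with A have jk: "j \<in> R" "k \<in> R" "j \<noteq> k" "\<mu> j > 0" by auto
    from rosenthal_potential_move_follower[where \<mu> = \<mu> and D = D, OF assms(1) jk] min[OF closed[OF \<mu> \<open>A \<mu> j k\<close>]]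
    show "D j (\<mu> j) \<le> D k (\<mu> k + 1)" by linarith
  qed
qed

lemma follower_cost_pure_at:
  "follower_cost cf (pure_at i) j x = of_rat (if j = i then cf j (Suc x) else cf j x)"
  by (simp add: follower_cost_def pure_at_def)

lemma leader_strategy_pure_at: "finite R \<Longrightarrow> i \<in> R \<Longrightarrow> leader_strategy R (pure_at i)"
  by (simp add: leader_strategy_def pure_at_def)

lemma leader_cost_pure_at:
  assumes "finite R" "i \<in> R"
  shows "leader_cost R cl (pure_at i) \<nu> = of_rat (cl i (Suc (\<nu> i)))"
proof -
  have "leader_cost R cl (pure_at i) \<nu>
      = (\<Sum>j\<in>R. if j = i then (of_rat (cl j (Suc (\<nu> j))) :: real) else 0)"
    unfolding leader_cost_def by (rule sum.cong) (auto simp: pure_at_def)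
  then show ?thesis using assms by simp
qed

lemma weakly_monotonic_le:
  assumes "weakly_monotonic R cl cf" "l \<in> R" "a \<le> b"
  shows "(of_rat (cl l a) :: real) \<le> of_rat (cl l b)" "(of_rat (cf l a) :: real) \<le> of_rat (cf l b)"
proof -
  have "cl l a \<le> cl l b" "cf l a \<le> cf l b"
    using assms by (auto simp: weakly_monotonic_def intro: lift_Suc_mono_le)
  then show "(of_rat (cl l a) :: real) \<le> of_rat (cl l b)" "(of_rat (cf l a) :: real) \<le> of_rat (cf l b)"
    by (simp_all add: of_rat_less_eq)
qed

lemma leader_strategy_bounds:
  assumes "leader_strategy R \<sigma>" "finite R" "l \<in> R"
  shows "0 \<le> \<sigma> l" "\<sigma> l \<le> 1"
proof -
  show "0 \<le> \<sigma> l" using assms by (auto simp: leader_strategy_def)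
  have "\<sigma> l \<le> (\<Sum>i\<in>R. \<sigma> i)"
    by (rule member_le_sum) (use assms in \<open>auto simp: leader_strategy_def\<close>)
  then show "\<sigma> l \<le> 1" using assms by (auto simp: leader_strategy_def)
qed

lemma follower_cost_bounds:
  assumes "weakly_monotonic R cl cf" "l \<in> R" "0 \<le> \<sigma> l" "\<sigma> l \<le> 1"
  shows "of_rat (cf l x) \<le> follower_cost cf \<sigma> l x"
    and "follower_cost cf \<sigma> l x \<le> of_rat (cf l (Suc x))"
proof -
  define a b where "a = (of_rat (cf l x) :: real)" and "b = (of_rat (cf l (Suc x)) :: real)"
  have "a \<le> b" unfolding a_def b_def by (rule weakly_monotonic_le(2)[OF assms(1,2)]) simp
  moreover have "follower_cost cf \<sigma> l x = a + \<sigma> l * (b - a)"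
    by (simp add: follower_cost_def a_def b_def algebra_simps)
  moreover have "\<sigma> l * (b - a) \<le> b - a"
    using mult_right_mono[of "\<sigma> l" 1 "b - a"] \<open>a \<le> b\<close> assms(4) by simp
  ultimately show "a \<le> follower_cost cf \<sigma> l x" "follower_cost cf \<sigma> l x \<le> b"
    using assms(3) by simp_all
qed

lemma exists_NE_pure_at:
  assumes "ssscg R F cl cf" "i \<in> R"
  shows "\<exists>\<mu>. is_NE R F cf (pure_at i) \<mu>"
proof -
  have fR: "finite R" using assms by (simp add: ssscg_def)
  have "configuration R F (\<lambda>l. if l = i then card F else 0)"
    using assms fR by (simp add: configuration_def)
  then have "{\<mu>. configuration R F \<mu>} \<noteq> {}" by blast
  then have "\<exists>\<mu>\<in>{\<mu>. configuration R F \<mu>}. \<forall>j k. j \<in> R \<and> k \<in> R \<and> j \<noteq> k \<and> 0 < \<mu> j \<longrightarrow>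
      follower_cost cf (pure_at i) j (\<mu> j) \<le> follower_cost cf (pure_at i) k (\<mu> k + 1)"
    by (rule exists_stable_configuration[OF fR finite_configurations[OF fR]])
       (auto intro: configuration_move_follower[OF fR])
  then show ?thesis unfolding is_NE_def by auto
qed

text \<open>A follower on a used resource \<open>l \<noteq> i\<close> in an equilibrium \<open>\<nu>\<close> pays at most what it would
  pay on \<open>i\<close> after joining it together with the leader.\<close>

lemma is_NE_cf_le_cf_Suc_Suc:
  assumes wm: "weakly_monotonic R cl cf" and "leader_strategy R \<sigma>" "finite R"
    and ne: "is_NE R F cf \<sigma> \<nu>" and "i \<in> R" "l \<in> R" "l \<noteq> i" "0 < \<nu> l" "x \<le> \<nu> l"
  shows "(of_rat (cf l x) :: real) \<le> of_rat (cf i (Suc (Suc (\<nu> i))))"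
proof -
  note bounds = leader_strategy_bounds[OF assms(2,3)]
  have "(of_rat (cf l x) :: real) \<le> of_rat (cf l (\<nu> l))"
    by (rule weakly_monotonic_le(2)[OF wm \<open>l \<in> R\<close> \<open>x \<le> \<nu> l\<close>])
  also have "\<dots> \<le> follower_cost cf \<sigma> l (\<nu> l)"
    using follower_cost_bounds(1)[where \<sigma> = \<sigma>, OF wm \<open>l \<in> R\<close> bounds[OF \<open>l \<in> R\<close>]] .
  also have "\<dots> \<le> follower_cost cf \<sigma> i (Suc (\<nu> i))"
    using ne assms(5-8) unfolding is_NE_def by auto
  also have "\<dots> \<le> of_rat (cf i (Suc (Suc (\<nu> i))))"
    using follower_cost_bounds(2)[where \<sigma> = \<sigma>, OF wm \<open>i \<in> R\<close> bounds[OF \<open>i \<in> R\<close>]] .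
  finally show ?thesis .
qed

lemma exists_NE_pure_at_le:
  assumes ss: "ssscg R F cl cf" and wm: "weakly_monotonic R cl cf"
    and ls: "leader_strategy R \<sigma>" and ne: "is_NE R F cf \<sigma> \<nu>" and "i \<in> R"
  shows "\<exists>\<mu>. is_NE R F cf (pure_at i) \<mu> \<and> \<mu> i \<le> \<nu> i"
proof -
  have fR: "finite R" using ss by (simp add: ssscg_def)
  have \<nu>: "configuration R F \<nu>" using ne by (simp add: is_NE_def)
  define S where "S = {\<mu>. configuration R F \<mu> \<and> \<mu> i \<le> \<nu> i}"
  define A where "A = (\<lambda>\<mu> j k. j \<in> R \<and> k \<in> R \<and> j \<noteq> k \<and> \<mu> j > 0 \<and> (k = i \<longrightarrow> \<mu> i < \<nu> i))"
  define D where "D = follower_cost cf (pure_at i)"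
  have "finite S" using finite_configurations[OF fR, of F] by (rule rev_finite_subset) (auto simp: S_def)
  moreover have "S \<noteq> {}" using \<nu> by (auto simp: S_def)
  moreover have "move_follower \<mu> j k \<in> S" if "\<mu> \<in> S" "A \<mu> j k" for \<mu> j k
    using that configuration_move_follower[OF fR, of j k \<mu> F]
    unfolding S_def A_def by (auto simp: move_follower_def)
  ultimately obtain \<mu> where "\<mu> \<in> S" and stable: "\<And>j k. A \<mu> j k \<Longrightarrow> D j (\<mu> j) \<le> D k (\<mu> k + 1)"
    using exists_stable_configuration[OF fR, of S A D] unfolding A_def by blast
  then have \<mu>: "configuration R F \<mu>" and "\<mu> i \<le> \<nu> i" by (auto simp: S_def)
  have "D j (\<mu> j) \<le> D k (\<mu> k + 1)" if j: "j \<in> R" "k \<in> R" "j \<noteq> k" "\<mu> j > 0" for j k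
  proof (cases "A \<mu> j k")
    case False
    with j \<open>\<mu> i \<le> \<nu> i\<close> have "k = i" "\<mu> i = \<nu> i" unfolding A_def by auto
    note bound = is_NE_cf_le_cf_Suc_Suc[OF wm ls fR ne \<open>i \<in> R\<close>]
    have "D j (\<mu> j) \<le> of_rat (cf i (Suc (Suc (\<nu> i))))"
    proof (cases "\<mu> j \<le> \<nu> j")
      case True
      then show ?thesis using bound[of j] j \<open>k = i\<close> by (simp add: D_def follower_cost_pure_at)
    next
      case False
      then obtain k' where "k' \<in> R" "\<mu> k' < \<nu> k'"
        using configuration_exists_less[OF fR \<mu> \<nu> \<open>j \<in> R\<close>] by auto
      moreover have "k' \<noteq> i" "k' \<noteq> j" using \<open>\<mu> i = \<nu> i\<close> \<open>\<mu> k' < \<nu> k'\<close> False by auto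
      ultimately have "D j (\<mu> j) \<le> D k' (\<mu> k' + 1)" using stable j unfolding A_def by blast
      then show ?thesis
        using bound[of k' "\<mu> k' + 1"] \<open>k' \<in> R\<close> \<open>k' \<noteq> i\<close> \<open>\<mu> k' < \<nu> k'\<close>
        by (simp add: D_def follower_cost_pure_at)
    qed
    then show ?thesis using \<open>k = i\<close> \<open>\<mu> i = \<nu> i\<close> by (simp add: D_def follower_cost_pure_at)
  qed (rule stable)
  then have "is_NE R F cf (pure_at i) \<mu>" unfolding is_NE_def using \<mu> by (auto simp: D_def)
  then show ?thesis using \<open>\<mu> i \<le> \<nu> i\<close> by blast
qed

lemma leader_cost_ge_support_min:
  assumes "finite R" "leader_strategy R \<sigma>"
  shows "\<exists>i\<in>R. of_rat (cl i (Suc (\<nu> i))) \<le> leader_cost R cl \<sigma> \<nu>"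
proof -
  define U where "U = {i\<in>R. \<sigma> i > 0}"
  define c where "c i = (of_rat (cl i (Suc (\<nu> i))) :: real)" for i
  have "U \<noteq> {}"
  proof
    assume "U = {}"
    then have "\<forall>i\<in>R. \<sigma> i = 0" using assms(2) unfolding U_def leader_strategy_def
      by (metis (mono_tags, lifting) empty_Collect_eq order_less_le)
    then show False using assms(2) by (simp add: leader_strategy_def)
  qed
  moreover have "finite U" using assms(1) by (simp add: U_def)
  ultimately obtain i where "i \<in> U" and min: "\<And>j. j \<in> U \<Longrightarrow> c i \<le> c j"
    using arg_min_if_finite(1) arg_min_least by metis
  have "c i = (\<Sum>j\<in>R. \<sigma> j * c i)"
    using assms(2) by (simp add: leader_strategy_def sum_distrib_right[symmetric])
  also have "\<dots> \<le> (\<Sum>j\<in>R. \<sigma> j * c j)"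
  proof (rule sum_mono)
    fix j assume "j \<in> R"
    then have "\<sigma> j = 0 \<or> j \<in> U" using assms(2) by (auto simp: U_def leader_strategy_def order_less_le)
    then show "\<sigma> j * c i \<le> \<sigma> j * c j" using min[of j] by (auto simp: U_def)
  qed
  finally show ?thesis using \<open>i \<in> U\<close> by (auto simp: U_def c_def leader_cost_def)
qed

lemma exists_pure_NE_le_leader_cost:
  assumes ss: "ssscg R F cl cf" and wm: "weakly_monotonic R cl cf"
    and ls: "leader_strategy R \<sigma>" and ne: "is_NE R F cf \<sigma> \<nu>"
  shows "\<exists>i\<in>R. \<exists>\<mu>. is_NE R F cf (pure_at i) \<mu> \<and> of_rat (cl i (Suc (\<mu> i))) \<le> leader_cost R cl \<sigma> \<nu>"
proof -
  have fR: "finite R" using ss by (simp add: ssscg_def)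
  obtain i where "i \<in> R" and i: "of_rat (cl i (Suc (\<nu> i))) \<le> leader_cost R cl \<sigma> \<nu>"
    using leader_cost_ge_support_min[OF fR ls] by blast
  obtain \<mu> where "is_NE R F cf (pure_at i) \<mu>" "\<mu> i \<le> \<nu> i"
    using exists_NE_pure_at_le[OF ss wm ls ne \<open>i \<in> R\<close>] by blast
  moreover have "(of_rat (cl i (Suc (\<mu> i))) :: real) \<le> of_rat (cl i (Suc (\<nu> i)))"
    using weakly_monotonic_le(1)[OF wm \<open>i \<in> R\<close>] \<open>\<mu> i \<le> \<nu> i\<close> by simp
  ultimately show ?thesis using \<open>i \<in> R\<close> i by force
qed

lemma exists_cheapest_pure_NE:
  fixes R :: "'r set"
  assumes "ssscg R F cl cf"
  obtains i \<mu> where "i \<in> R" "is_NE R F cf (pure_at i) \<mu>"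
    "\<And>j \<mu>'. j \<in> R \<Longrightarrow> is_NE R F cf (pure_at j) \<mu>' \<Longrightarrow>
       (of_rat (cl i (Suc (\<mu> i))) :: real) \<le> of_rat (cl j (Suc (\<mu>' j)))"
proof -
  have fR: "finite R" and "R \<noteq> {}" using assms by (auto simp: ssscg_def)
  define Q where "Q = {(i, \<mu>). i \<in> R \<and> is_NE R F cf (pure_at i) \<mu>}"
  define f where "f = (\<lambda>(i, \<mu>::'r \<Rightarrow> nat). (of_rat (cl i (Suc (\<mu> i))) :: real))"
  have "finite Q"
    by (rule finite_subset[OF _ finite_cartesian_product[OF fR finite_configurations[OF fR, of F]]])
       (auto simp: Q_def is_NE_def)
  moreover have "Q \<noteq> {}"
    using \<open>R \<noteq> {}\<close> exists_NE_pure_at[OF assms] by (auto simp: Q_def)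
  ultimately obtain q where "q \<in> Q" "\<And>q'. q' \<in> Q \<Longrightarrow> f q \<le> f q'"
    using arg_min_if_finite(1) arg_min_least by metis
  then show ?thesis using that by (cases q) (auto simp: Q_def f_def)
qed

theorem theorem7:
  fixes R :: "'r set" and F :: "'f set"
    and cl cf :: "'r \<Rightarrow> nat \<Rightarrow> rat"
  assumes "ssscg R F cl cf"
    and "weakly_monotonic R cl cf"
  shows "\<exists>\<sigma> \<nu>. is_OSE R F cl cf \<sigma> \<nu> \<and> pure_strategy R \<sigma>"
proof -
  have fR: "finite R" using assms(1) by (simp add: ssscg_def)
  obtain i \<mu> where "i \<in> R" and NE: "is_NE R F cf (pure_at i) \<mu>"
    and cheapest: "\<And>j \<mu>'. j \<in> R \<Longrightarrow> is_NE R F cf (pure_at j) \<mu>' \<Longrightarrow>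
       (of_rat (cl i (Suc (\<mu> i))) :: real) \<le> of_rat (cl j (Suc (\<mu>' j)))"
    using exists_cheapest_pure_NE[OF assms(1)] by blast
  have "leader_cost R cl (pure_at i) \<mu> \<le> leader_cost R cl \<sigma> \<nu>"
    if "leader_strategy R \<sigma>" "is_NE R F cf \<sigma> \<nu>" for \<sigma> \<nu>
  proof -
    from exists_pure_NE_le_leader_cost[OF assms that]
    obtain j \<mu>' where "j \<in> R" "is_NE R F cf (pure_at j) \<mu>'"
      "of_rat (cl j (Suc (\<mu>' j))) \<le> leader_cost R cl \<sigma> \<nu>" by blast
    then show ?thesis using cheapest leader_cost_pure_at[OF fR \<open>i \<in> R\<close>] by fastforce
  qed
  moreover have "leader_strategy R (pure_at i)" by (rule leader_strategy_pure_at[OF fR \<open>i \<in> R\<close>])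
  ultimately have "is_OSE R F cl cf (pure_at i) \<mu>" using NE by (simp add: is_OSE_def)
  moreover have "pure_strategy R (pure_at i)"
    using \<open>leader_strategy R (pure_at i)\<close> \<open>i \<in> R\<close> by (auto simp: pure_strategy_def pure_at_def)
  ultimately show ?thesis by blast
qed

end
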